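(* Let $K(t,u)=1+\frac{14}{15}\sqrt[5]{4\left(t-\frac12\right)\left(u-\frac12\right)}$ for $t,u\in[0,1]$. The Hammerstein operator $(H_2f)(t)=\int_0^1K(t,u)f^2(u)\,du$ on $C[0,1]$ has at least two distinct strictly positive fixed points.
   Context: For real $s$, $\sqrt[5]{s}$ denotes the real fifth root (negative for $s<0$). *)

theory Defs
  imports "HOL-Analysis.Analysis"
begin

text \<open>Kernel K(t,u) = 1 + (14/15) * real fifth root of 4(t-1/2)(u-1/2).
  Note: root 5 is the odd real fifth root (negative for negative arguments).\<close>
definition K :: "real \<Rightarrow> real \<Rightarrow> real" where
  "K t u = 1 + (14/15) * root 5 (4 * (t - 1/2) * (u - 1/2))"

definition H2 :: "(real \<Rightarrow> real) \<Rightarrow> real \<Rightarrow> real" where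
  "H2 f t = integral {0..1} (\<lambda>u. K t u * (f u)^2)"

definition pos_fixed_point :: "(real \<Rightarrow> real) \<Rightarrow> bool" where
  "pos_fixed_point f \<longleftrightarrow> continuous_on {0..1} f \<and> (\<forall>t\<in>{0..1}. f t > 0)
     \<and> (\<forall>t\<in>{0..1}. H2 f t = f t)"

end

theory Submission
  imports Defs
begin

text \<open>
  Write \<open>psi u = root 5 (2u - 1)\<close>, the odd real fifth root. Since
  \<open>4(t - 1/2)(u - 1/2) = (2t - 1)(2u - 1)\<close>, the kernel separates:
  \<open>K t u = 1 + 14/15 * psi t * psi u\<close>. The moments of \<open>psi\<close> over [0,1] are explicit,
  \<open>\<integral> psi^n = 5/(n+5)\<close> for even n and 0 for odd n, because \<open>psi^(n+5)\<close> is an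
  antiderivative of \<open>(n+5)*2/5 * psi^n\<close> away from u = 1/2. Consequently the operator
  maps the two-dimensional family \<open>a + b * psi\<close> into itself:
  \<open>H2 (a + b psi) = (a^2 + 5/7 b^2) + (4/3 a b) psi\<close>.
  A fixed point in this family is thus a solution of \<open>a^2 + 5/7 b^2 = a\<close>,
  \<open>4/3 a b = b\<close>, and it is strictly positive on [0,1] when \<open>|b| < a\<close> (as \<open>|psi| \<le> 1\<close>).
  The solutions \<open>(a,b) = (1,0)\<close> and \<open>(3/4, sqrt(21/80))\<close> give two distinct
  strictly positive fixed points, the second one non-constant.
\<close>

definition psi :: "real \<Rightarrow> real" where
  "psi u = root 5 (2*u - 1)"

lemma K_psi: "K t u = 1 + 14/15 * psi t * psi u"
proof -
  have "4 * (t - 1/2) * (u - 1/2) = (2*t - 1) * (2*u - 1)"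
    by (simp add: algebra_simps)
  then show ?thesis
    unfolding K_def psi_def by (simp add: real_root_mult)
qed

lemma psi_bound: "t \<in> {0..1} \<Longrightarrow> \<bar>psi t\<bar> \<le> 1"
proof -
  assume "t \<in> {0..1}"
  then have "\<bar>2*t - 1\<bar> \<le> 1"
    by auto
  then have "root 5 \<bar>2*t - 1\<bar> \<le> root 5 1"
    by simp
  then show ?thesis
    unfolding psi_def by (simp add: real_root_abs)
qed

lemma psi_power_deriv:
  assumes "u \<noteq> 1/2"
  shows "((\<lambda>u. psi u ^ (n+5)) has_real_derivative (real (n+5) * 2/5 * psi u ^ n)) (at u)"
proof -
  have nz: "2*u - 1 \<noteq> 0"
    using assms by auto
  then have psi_nz: "psi u \<noteq> 0"
    unfolding psi_def by simp
  have root_deriv: "(root 5 has_real_derivative inverse (real 5 * psi u ^ 4)) (at (2*u - 1))"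
    using DERIV_odd_real_root[of 5 "2*u - 1"] nz by (simp add: psi_def)
  have affine_deriv: "((\<lambda>u. 2*u - 1) has_real_derivative 2) (at u)"
    by (auto intro!: derivative_eq_intros)
  have "(psi has_real_derivative inverse (real 5 * psi u ^ 4) * 2) (at u)"
    using DERIV_chain2[OF root_deriv affine_deriv] by (simp add: psi_def[abs_def])
  from DERIV_power[OF this, of "n+5"]
  have "((\<lambda>u. psi u ^ (n+5)) has_real_derivative
          real (n+5) * psi u ^ (n+4) * (inverse (real 5 * psi u ^ 4) * 2)) (at u)"
    by (simp add: mult_ac add.commute)
  moreover have "real (n+5) * psi u ^ (n+4) * (inverse (real 5 * psi u ^ 4) * 2)
                  = real (n+5) * 2/5 * psi u ^ n"
    using psi_nz by (simp add: field_simps power_add)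
  ultimately show ?thesis
    by metis
qed

text \<open>The moments of \<open>psi\<close> on [0,1]: odd ones vanish by symmetry, even ones are \<open>5/(n+5)\<close>.\<close>
lemma psi_moment:
  "((\<lambda>u. psi u ^ n) has_integral (if even n then 5 / real (n+5) else 0)) {0..1}"
proof -
  define F where "F u = 5 / (2 * real (n+5)) * psi u ^ (n+5)" for u
  have "((\<lambda>u. psi u ^ n) has_integral (F 1 - F 0)) {0..1}"
  proof (rule fundamental_theorem_of_calculus_interior_strong[of "{1/2}"])
    fix x :: real
    assume "x \<in> {0<..<1} - {1/2}"
    then have "(F has_real_derivative 5 / (2 * real (n+5)) * (real (n+5) * 2/5 * psi x ^ n)) (at x)"
      unfolding F_def[abs_def] by (intro DERIV_cmult psi_power_deriv) auto
    moreover have "5 / (2 * real (n+5)) * (real (n+5) * 2/5 * psi x ^ n) = psi x ^ n"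
      by (simp add: field_simps)
    ultimately show "(F has_vector_derivative psi x ^ n) (at x)"
      by (simp add: has_real_derivative_iff_has_vector_derivative)
  next
    show "continuous_on {0..1} F"
      unfolding F_def psi_def by (intro continuous_intros)
  qed auto
  moreover have "F 1 - F 0 = 5 / (2 * real (n+5)) * (1 - (-1) ^ (n+5))"
    unfolding F_def psi_def by (simp add: real_root_minus power_minus' right_diff_distrib)
  moreover have "5 / (2 * real (n+5)) * (1 - (-1) ^ (n+5)) = (if even n then 5 / real (n+5) else 0)"
    by (cases "even n") (simp_all add: field_simps)
  ultimately show ?thesis
    by simp
qed

text \<open>The operator preserves the family \<open>a + b * psi\<close>: expanding the square and the
  separable kernel turns \<open>H2\<close> into a cubic polynomial in \<open>psi u\<close> integrated termwise.\<close>
lemma H2_affine: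
  "H2 (\<lambda>u. a + b * psi u) t = (a^2 + 5/7 * b^2) + (4/3 * a * b) * psi t"
proof -
  define c where "c = 14/15 * psi t"
  have integrand: "K t u * (a + b * psi u)^2
      = a^2 * psi u ^ 0 + (2*a*b + c*a^2) * psi u ^ 1
        + (b^2 + 2*a*b*c) * psi u ^ 2 + c*b^2 * psi u ^ 3" for u
    by (simp add: K_psi c_def power2_eq_square power3_eq_cube algebra_simps)
  have "((\<lambda>u. a^2 * psi u ^ 0 + (2*a*b + c*a^2) * psi u ^ 1
              + (b^2 + 2*a*b*c) * psi u ^ 2 + c*b^2 * psi u ^ 3)
        has_integral (a^2 * 1 + (2*a*b + c*a^2) * 0 + (b^2 + 2*a*b*c) * (5/7) + c*b^2 * 0)) {0..1}"
    using psi_moment[of 0] psi_moment[of 1] psi_moment[of 2] psi_moment[of 3]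
    by (intro has_integral_add has_integral_mult_right) simp_all
  then have "((\<lambda>u. K t u * (a + b * psi u)^2) has_integral
               (a^2 + 5/7 * b^2) + (4/3 * a * b) * psi t) {0..1}"
    unfolding integrand by (simp add: c_def algebra_simps)
  then show ?thesis
    unfolding H2_def by (rule integral_unique)
qed

lemma affine_pos_fixed_point:
  assumes constant_eq: "a^2 + 5/7 * b^2 = a"
    and slope_eq: "4/3 * a * b = b"
    and dominant: "\<bar>b\<bar> < a"
  shows "pos_fixed_point (\<lambda>u. a + b * psi u)"
  unfolding pos_fixed_point_def
proof (intro conjI ballI)
  show "continuous_on {0..1} (\<lambda>u. a + b * psi u)"
    unfolding psi_def by (intro continuous_intros)
next
  fix t :: real
  assume "t \<in> {0..1}"
  then have "\<bar>b * psi t\<bar> \<le> \<bar>b\<bar>"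
    using psi_bound by (simp add: abs_mult mult_left_le)
  then show "0 < a + b * psi t"
    using dominant by linarith
next
  fix t :: real
  show "H2 (\<lambda>u. a + b * psi u) t = a + b * psi t"
    by (simp only: H2_affine constant_eq slope_eq)
qed

lemma constant_fixed_point: "pos_fixed_point (\<lambda>u. 1 + 0 * psi u)"
  by (rule affine_pos_fixed_point) auto

lemma nonconstant_fixed_point: "pos_fixed_point (\<lambda>u. 3/4 + sqrt (21/80) * psi u)"
proof (rule affine_pos_fixed_point)
  have "sqrt (21/80) < sqrt ((3/4)^2)"
    by (intro real_sqrt_less_mono) (simp add: power2_eq_square)
  then show "\<bar>sqrt (21/80)\<bar> < 3/4"
    by simp
qed (simp_all add: power2_eq_square)

theorem proposition3p1:
  shows "\<exists>f g. pos_fixed_point f \<and> pos_fixed_point g \<and> (\<exists>t\<in>{0..1}. f t \<noteq> g t)"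
proof -
  have "psi 1 = 1"
    unfolding psi_def by simp
  moreover have "sqrt (21/80) \<noteq> sqrt ((1/4)^2)"
    by (simp add: power2_eq_square)
  ultimately have "1 + 0 * psi 1 \<noteq> 3/4 + sqrt (21/80) * psi 1"
    by simp
  then show ?thesis
    using constant_fixed_point nonconstant_fixed_point by force
qed

end
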